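(* For GT systems $T_1=(\mathcal L,\mathcal R_1)$ and $T_2=(\mathcal L,\mathcal R_2)$ over a common label alphabet: $T_1\cong T_2$ implies $T_1\simeq_N T_2$, which implies $T_1\simeq_S T_2$, which implies $T_1\simeq_F T_2$. Moreover, none of the converse implications holds in general: there exist GT systems that are normalisation equivalent but not isomorphic, step-wise equivalent but not normalisation equivalent, and semantically equivalent but not step-wise equivalent.
   Context: Fix a label alphabet $\mathcal L=(\mathcal L_V,\mathcal L_E)$ of finite sets. A graph over $\mathcal L$ is $G=(V,E,s,t,l,m,p)$ with $V,E$ finite, $s,t:E\to V$ total, $l:V\rightharpoonup\mathcal L_V$ partial, $m:E\to\mathcal L_E$ total, $p:V\rightharpoonup\{0,1\}$ partial (rootedness). $G$ is a TLRG if $l,p$ are total. Morphisms preserve sources, targets, edge labels, and node labels and rootedness wherever defined; isomorphisms are bijective morphisms whose inverse is a morphism. $\mathcal G^{\oplus}(\mathcal L)$ is the set of isomorphism classes $[G]$ of TLRGs. A rule $r=\langle L\leftarrow K\rightarrow R\rangle$ consists of TLRGs $L,R$ and a graph $K$ that is a subgraph of both (sets included, $s,t,m$ restricted, $l_K\subseteq l_L$, $p_K\subseteq p_L$, likewise for $R$). Rule application to TLRG $G$ via an injective $g:L\to G$ satisfying the dangling condition (no edge outside $g(L)$ incident to a node of $g(V_L\setminus V_K)$): delete images of items of $L$ not in $K$, undefine label/rootedness of $g_V(v)$ where undefined for $v\in V_K$; add disjointly items of $R$ not in $K$, set label/rootedness of $g_V(v)$ to $l_R(v)/p_R(v)$ where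 undefined in $K$; $G\Rightarrow_r H$ if $H$ is isomorphic to the result. A GT system $T=(\mathcal L,\mathcal R)$ has a finite rule set $\mathcal R$. Rules $r_1,r_2$ are isomorphic ($r_1\cong r_2$) if there are isomorphisms $f:L_1\to L_2$, $g:R_1\to R_2$ with $f|_{K_1}=g|_{K_1}$ and $f(K_1)=K_2$. The normal form of $r$ is $r{\downarrow}=\langle L\leftarrow K'\rightarrow R\rangle$ with $K'$ having the nodes of $K$, no edges, and undefined labels and rootedness; $r_1\simeq r_2$ iff $r_1{\downarrow}\cong r_2{\downarrow}$. The induced relation $\to_T$ on $\mathcal G^{\oplus}(\mathcal L)$ is $[G]\to_T[H]$ iff $G\Rightarrow_{\mathcal R}H$. The semantic function $f_T:\mathcal G^{\oplus}(\mathcal L)\to\mathcal P(\mathcal G^{\oplus}(\mathcal L)\cup\{\bot\})$ maps $[G]$ to the set of normal forms of $[G]$ w.r.t. $\to_T$ (those $[H]$ with $[G]\to_T^*[H]$ and $[H]$ irreducible), together with $\bot$ iff there is an infinite $\to_T$-sequence starting at $[G]$. Then: $T_1\cong T_2$ iff $\mathcal R_1/{\cong}=\mathcal R_2/{\cong}$ (equal sets of isomorphism classes of rules); $T_1\simeq_N T_2$ iff $\mathcal R_1/{\simeq}=\mathcal R_2/{\simeq}$; $T_1\simeq_S T_2$ iff $\to_{T_1}=\to_{T_2}$; $T_1\simeq_F T_2$ iff $f_{T_1}=f_{T_2}$. *)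

theory Defs
  imports Main
begin

text \<open>Node and edge identifiers are natural
numbers; every finite graph is isomorphic to one of this form.  Rootedness values
0/1 are represented by False/True.  Node labels and rootedness are partial
(option-valued); only values on the node/edge carriers matter.\<close>

record ('lv, 'le) lgraph =
  gV    :: "nat set"
  gE    :: "nat set"
  gsrc  :: "nat \<Rightarrow> nat"
  gtgt  :: "nat \<Rightarrow> nat"
  glab  :: "nat \<Rightarrow> 'lv option"
  gmrk  :: "nat \<Rightarrow> 'le"
  groot :: "nat \<Rightarrow> bool option"

definition graph_over :: "'lv set \<Rightarrow> 'le set \<Rightarrow> ('lv, 'le) lgraph \<Rightarrow> bool" where
  "graph_over LV LE G \<longleftrightarrow>
     finite (gV G) \<and> finite (gE G) \<and>
     (\<forall>e\<in>gE G. gsrc G e \<in> gV G \<and> gtgt G e \<in> gV G \<and> gmrk G e \<in> LE) \<and>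
     (\<forall>v\<in>gV G. set_option (glab G v) \<subseteq> LV)"

definition tlrg :: "'lv set \<Rightarrow> 'le set \<Rightarrow> ('lv, 'le) lgraph \<Rightarrow> bool" where
  "tlrg LV LE G \<longleftrightarrow> graph_over LV LE G \<and>
     (\<forall>v\<in>gV G. glab G v \<noteq> None \<and> groot G v \<noteq> None)"

definition morph :: "('lv, 'le) lgraph \<Rightarrow> ('lv, 'le) lgraph \<Rightarrow> (nat \<Rightarrow> nat) \<Rightarrow> (nat \<Rightarrow> nat) \<Rightarrow> bool" where
  "morph G H fV fE \<longleftrightarrow>
     fV ` gV G \<subseteq> gV H \<and> fE ` gE G \<subseteq> gE H \<and>
     (\<forall>e\<in>gE G. gsrc H (fE e) = fV (gsrc G e) \<and> gtgt H (fE e) = fV (gtgt G e)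
                \<and> gmrk H (fE e) = gmrk G e) \<and>
     (\<forall>v\<in>gV G. (glab G v \<noteq> None \<longrightarrow> glab H (fV v) = glab G v) \<and>
                (groot G v \<noteq> None \<longrightarrow> groot H (fV v) = groot G v))"

definition iso :: "('lv, 'le) lgraph \<Rightarrow> ('lv, 'le) lgraph \<Rightarrow> (nat \<Rightarrow> nat) \<Rightarrow> (nat \<Rightarrow> nat) \<Rightarrow> bool" where
  "iso G H fV fE \<longleftrightarrow> morph G H fV fE \<and> bij_betw fV (gV G) (gV H) \<and> bij_betw fE (gE G) (gE H) \<and>
     morph H G (inv_into (gV G) fV) (inv_into (gE G) fE)"

definition isomorphic :: "('lv, 'le) lgraph \<Rightarrow> ('lv, 'le) lgraph \<Rightarrow> bool" where
  "isomorphic G H \<longleftrightarrow> (\<exists>fV fE. iso G H fV fE)"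

definition cls :: "'lv set \<Rightarrow> 'le set \<Rightarrow> ('lv, 'le) lgraph \<Rightarrow> ('lv, 'le) lgraph set" where
  "cls LV LE G = {H. tlrg LV LE H \<and> isomorphic G H}"

definition classes :: "'lv set \<Rightarrow> 'le set \<Rightarrow> ('lv, 'le) lgraph set set" where
  "classes LV LE = {cls LV LE G | G. tlrg LV LE G}"

definition subgraph :: "('lv, 'le) lgraph \<Rightarrow> ('lv, 'le) lgraph \<Rightarrow> bool" where
  "subgraph K G \<longleftrightarrow> gV K \<subseteq> gV G \<and> gE K \<subseteq> gE G \<and>
     (\<forall>e\<in>gE K. gsrc K e = gsrc G e \<and> gtgt K e = gtgt G e \<and> gmrk K e = gmrk G e) \<and>
     (\<forall>v\<in>gV K. (glab K v \<noteq> None \<longrightarrow> glab K v = glab G v) \<and>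
                (groot K v \<noteq> None \<longrightarrow> groot K v = groot G v))"

record ('lv, 'le) lrule =
  lhs  :: "('lv, 'le) lgraph"
  intf :: "('lv, 'le) lgraph"
  rhs  :: "('lv, 'le) lgraph"

definition wf_rule :: "'lv set \<Rightarrow> 'le set \<Rightarrow> ('lv, 'le) lrule \<Rightarrow> bool" where
  "wf_rule LV LE r \<longleftrightarrow> tlrg LV LE (lhs r) \<and> tlrg LV LE (rhs r) \<and> graph_over LV LE (intf r) \<and>
     subgraph (intf r) (lhs r) \<and> subgraph (intf r) (rhs r)"

definition gts :: "'lv set \<Rightarrow> 'le set \<Rightarrow> ('lv, 'le) lrule set \<Rightarrow> bool" where
  "gts LV LE Rs \<longleftrightarrow> finite LV \<and> finite LE \<and> finite Rs \<and> (\<forall>r\<in>Rs. wf_rule LV LE r)"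

definition is_match :: "('lv, 'le) lrule \<Rightarrow> ('lv, 'le) lgraph \<Rightarrow> (nat \<Rightarrow> nat) \<Rightarrow> (nat \<Rightarrow> nat) \<Rightarrow> bool" where
  "is_match r G fV fE \<longleftrightarrow> morph (lhs r) G fV fE \<and> inj_on fV (gV (lhs r)) \<and> inj_on fE (gE (lhs r)) \<and>
     (\<forall>e\<in>gE G - fE ` gE (lhs r).
        gsrc G e \<notin> fV ` (gV (lhs r) - gV (intf r)) \<and> gtgt G e \<notin> fV ` (gV (lhs r) - gV (intf r)))"

text \<open>The result of the rule application.  Items kept from G with identifier x get the
identifier 2x, items added from R with identifier y get 2y+1 (disjoint union).\<close>
definition app_res :: "('lv, 'le) lgraph \<Rightarrow> ('lv, 'le) lrule \<Rightarrow> (nat \<Rightarrow> nat) \<Rightarrow> (nat \<Rightarrow> nat) \<Rightarrow> ('lv, 'le) lgraph" where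
  "app_res G r fV fE =
    (let L = lhs r; K = intf r; R = rhs r;
         embR = (\<lambda>v. if v \<in> gV K then 2 * fV v else 2 * v + 1);
         kept = (\<lambda>y. y \<in> fV ` gV K);
         pre = (\<lambda>y. the_inv_into (gV K) fV y)
     in \<lparr> gV = (\<lambda>x. 2 * x) ` (gV G - fV ` (gV L - gV K)) \<union> (\<lambda>v. 2 * v + 1) ` (gV R - gV K),
          gE = (\<lambda>x. 2 * x) ` (gE G - fE ` (gE L - gE K)) \<union> (\<lambda>e. 2 * e + 1) ` (gE R - gE K),
          gsrc = (\<lambda>x. if even x then 2 * gsrc G (x div 2) else embR (gsrc R (x div 2))),
          gtgt = (\<lambda>x. if even x then 2 * gtgt G (x div 2) else embR (gtgt R (x div 2))),
          glab = (\<lambda>x. if even x then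
                        (if kept (x div 2) \<and> glab K (pre (x div 2)) = None
                         then glab R (pre (x div 2)) else glab G (x div 2))
                      else glab R (x div 2)),
          gmrk = (\<lambda>x. if even x then gmrk G (x div 2) else gmrk R (x div 2)),
          groot = (\<lambda>x. if even x then
                        (if kept (x div 2) \<and> groot K (pre (x div 2)) = None
                         then groot R (pre (x div 2)) else groot G (x div 2))
                      else groot R (x div 2)) \<rparr>)"

definition derives :: "'lv set \<Rightarrow> 'le set \<Rightarrow> ('lv, 'le) lrule set \<Rightarrow> ('lv, 'le) lgraph \<Rightarrow> ('lv, 'le) lgraph \<Rightarrow> bool" where
  "derives LV LE Rs G H \<longleftrightarrow> graph_over LV LE H \<and>
     (\<exists>r\<in>Rs. \<exists>fV fE. is_match r G fV fE \<and> isomorphic H (app_res G r fV fE))"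

definition steps :: "'lv set \<Rightarrow> 'le set \<Rightarrow> ('lv, 'le) lrule set \<Rightarrow> (('lv, 'le) lgraph set \<times> ('lv, 'le) lgraph set) set" where
  "steps LV LE Rs = {(cls LV LE G, cls LV LE H) | G H. tlrg LV LE G \<and> derives LV LE Rs G H}"

text \<open>Semantic function; None plays the role of \<bottom>.\<close>
definition sem :: "'lv set \<Rightarrow> 'le set \<Rightarrow> ('lv, 'le) lrule set \<Rightarrow> ('lv, 'le) lgraph set \<Rightarrow> ('lv, 'le) lgraph set option set" where
  "sem LV LE Rs X =
     {Some Y | Y. (X, Y) \<in> (steps LV LE Rs)\<^sup>* \<and> (\<nexists>Z. (Y, Z) \<in> steps LV LE Rs)} \<union>
     (if (\<exists>s :: nat \<Rightarrow> ('lv, 'le) lgraph set. s 0 = X \<and> (\<forall>i. (s i, s (Suc i)) \<in> steps LV LE Rs))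
      then {None} else {})"

definition rule_iso :: "('lv, 'le) lrule \<Rightarrow> ('lv, 'le) lrule \<Rightarrow> bool" where
  "rule_iso r1 r2 \<longleftrightarrow> (\<exists>fV fE hV hE.
     iso (lhs r1) (lhs r2) fV fE \<and> iso (rhs r1) (rhs r2) hV hE \<and>
     (\<forall>v\<in>gV (intf r1). fV v = hV v) \<and> (\<forall>e\<in>gE (intf r1). fE e = hE e) \<and>
     fV ` gV (intf r1) = gV (intf r2) \<and> fE ` gE (intf r1) = gE (intf r2) \<and>
     (\<forall>v\<in>gV (intf r1). glab (intf r2) (fV v) = glab (intf r1) v \<and>
                        groot (intf r2) (fV v) = groot (intf r1) v))"

definition rule_nf :: "('lv, 'le) lrule \<Rightarrow> ('lv, 'le) lrule" where
  "rule_nf r = r\<lparr> intf := (intf r)\<lparr> gE := {}, glab := (\<lambda>_. None), groot := (\<lambda>_. None) \<rparr> \<rparr>"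

definition rule_nf_iso :: "('lv, 'le) lrule \<Rightarrow> ('lv, 'le) lrule \<Rightarrow> bool" where
  "rule_nf_iso r1 r2 \<longleftrightarrow> rule_iso (rule_nf r1) (rule_nf r2)"

definition rule_cls :: "'lv set \<Rightarrow> 'le set \<Rightarrow> (('lv, 'le) lrule \<Rightarrow> ('lv, 'le) lrule \<Rightarrow> bool) \<Rightarrow> ('lv, 'le) lrule \<Rightarrow> ('lv, 'le) lrule set" where
  "rule_cls LV LE rel r = {r'. wf_rule LV LE r' \<and> rel r' r}"

definition gts_iso :: "'lv set \<Rightarrow> 'le set \<Rightarrow> ('lv, 'le) lrule set \<Rightarrow> ('lv, 'le) lrule set \<Rightarrow> bool" where
  "gts_iso LV LE R1 R2 \<longleftrightarrow> rule_cls LV LE rule_iso ` R1 = rule_cls LV LE rule_iso ` R2"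

definition norm_equiv :: "'lv set \<Rightarrow> 'le set \<Rightarrow> ('lv, 'le) lrule set \<Rightarrow> ('lv, 'le) lrule set \<Rightarrow> bool" where
  "norm_equiv LV LE R1 R2 \<longleftrightarrow> rule_cls LV LE rule_nf_iso ` R1 = rule_cls LV LE rule_nf_iso ` R2"

definition step_equiv :: "'lv set \<Rightarrow> 'le set \<Rightarrow> ('lv, 'le) lrule set \<Rightarrow> ('lv, 'le) lrule set \<Rightarrow> bool" where
  "step_equiv LV LE R1 R2 \<longleftrightarrow> steps LV LE R1 = steps LV LE R2"

definition sem_equiv :: "'lv set \<Rightarrow> 'le set \<Rightarrow> ('lv, 'le) lrule set \<Rightarrow> ('lv, 'le) lrule set \<Rightarrow> bool" where
  "sem_equiv LV LE R1 R2 \<longleftrightarrow> (\<forall>X\<in>classes LV LE. sem LV LE R1 X = sem LV LE R2 X)"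

end

theory Submission
  imports Defs
begin

text \<open>Two rules with isomorphic normal forms act alike: applying the normal form of a rule
  deletes and re-creates the interface edges and leaves the interface labels to the
  right-hand side, which agrees with the left-hand side there, so its result is isomorphic
  to that of the rule itself; and an isomorphism of normal forms transports matches (both
  rules delete corresponding nodes) and results (the added parts are related by the
  right-hand side isomorphism).
  The converses fail over a one-letter alphabet: the identity rule on a node is not
  isomorphic to its variant with an unlabelled interface node, though both have the same
  normal form; adding the identity rule on a node to the empty rule changes the normal
  forms but not the steps; and adding a node-creating rule to the empty rule adds steps,
  but the empty rule already loops on every graph, so both systems have no normal forms
  and the semantics is constantly the divergence marker.\<close>

section \<open>Graph isomorphisms\<close>

definition incidence_closed :: "('lv, 'le) lgraph \<Rightarrow> bool" where
  "incidence_closed G \<longleftrightarrow> (\<forall>e\<in>gE G. gsrc G e \<in> gV G \<and> gtgt G e \<in> gV G)"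

lemma graph_over_incidence_closed: "graph_over LV LE G \<Longrightarrow> incidence_closed G"
  by (auto simp: graph_over_def incidence_closed_def)

lemma tlrg_incidence_closed: "tlrg LV LE G \<Longrightarrow> incidence_closed G"
  by (auto simp: tlrg_def intro: graph_over_incidence_closed)

lemma morph_comp: "morph G H f g \<Longrightarrow> morph H K f' g' \<Longrightarrow> morph G K (f' \<circ> f) (g' \<circ> g)"
  unfolding morph_def by (auto simp: image_subset_iff)

lemma morph_cong:
  assumes "incidence_closed G" "morph G H f g"
    and "\<And>v. v \<in> gV G \<Longrightarrow> f' v = f v" "\<And>e. e \<in> gE G \<Longrightarrow> g' e = g e"
  shows "morph G H f' g'"
  using assms unfolding morph_def incidence_closed_def by (auto simp: image_subset_iff)

lemma isoI:
  assumes closed: "incidence_closed G"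
    and inj_f: "inj_on f (gV G)" and inj_g: "inj_on g (gE G)"
    and f_onto: "f ` gV G = gV H" and g_onto: "g ` gE G = gE H"
    and edges: "\<And>e. e \<in> gE G \<Longrightarrow>
      gsrc H (g e) = f (gsrc G e) \<and> gtgt H (g e) = f (gtgt G e) \<and> gmrk H (g e) = gmrk G e"
    and nodes: "\<And>v. v \<in> gV G \<Longrightarrow> glab H (f v) = glab G v \<and> groot H (f v) = groot G v"
  shows "iso G H f g"
proof -
  have "morph G H f g" using f_onto g_onto edges nodes by (auto simp: morph_def)
  moreover have "morph H G (inv_into (gV G) f) (inv_into (gE G) g)"
  proof -
    have "gsrc G (inv_into (gE G) g e') = inv_into (gV G) f (gsrc H e') \<and>
        gtgt G (inv_into (gE G) g e') = inv_into (gV G) f (gtgt H e') \<and>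
        gmrk G (inv_into (gE G) g e') = gmrk H e'" if "e' \<in> gE H" for e'
    proof -
      obtain e where e: "e \<in> gE G" "e' = g e" using \<open>e' \<in> gE H\<close> g_onto by auto
      moreover have "gsrc G e \<in> gV G" "gtgt G e \<in> gV G"
        using closed e by (auto simp: incidence_closed_def)
      ultimately show ?thesis using edges[OF e(1)] inj_f inj_g by simp
    qed
    moreover have "glab G (inv_into (gV G) f v') = glab H v' \<and>
        groot G (inv_into (gV G) f v') = groot H v'" if "v' \<in> gV H" for v'
    proof -
      obtain v where "v \<in> gV G" "v' = f v" using \<open>v' \<in> gV H\<close> f_onto by auto
      then show ?thesis using nodes inj_f by simp
    qed
    ultimately show ?thesis
      using f_onto g_onto by (auto simp: morph_def intro: inv_into_into)
  qed
  ultimately show ?thesis using inj_f inj_g f_onto g_onto by (simp add: iso_def bij_betw_def)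
qed

lemma iso_refl: "incidence_closed G \<Longrightarrow> iso G G id id"
  by (rule isoI) auto

lemma iso_sym:
  assumes closed: "incidence_closed G" and i: "iso G H f g"
  shows "iso H G (inv_into (gV G) f) (inv_into (gE G) g)"
proof -
  have bf: "bij_betw f (gV G) (gV H)" and bg: "bij_betw g (gE G) (gE H)" and m: "morph G H f g"
    and m_inv: "morph H G (inv_into (gV G) f) (inv_into (gE G) g)" using i by (auto simp: iso_def)
  have "morph G H (inv_into (gV H) (inv_into (gV G) f)) (inv_into (gE H) (inv_into (gE G) g))"
    by (rule morph_cong[OF closed m]) (auto simp: inv_into_inv_into_eq[OF bf] inv_into_inv_into_eq[OF bg])
  then show ?thesis using m_inv bij_betw_inv_into[OF bf] bij_betw_inv_into[OF bg] by (simp add: iso_def)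
qed

lemma inv_into_comp_on:
  assumes "bij_betw f A B" "bij_betw f' B C" "y \<in> C"
  shows "inv_into A (f' \<circ> f) y = (inv_into A f \<circ> inv_into B f') y"
proof -
  obtain x where x: "x \<in> A" "y = f' (f x)"
    using assms bij_betw_trans[OF assms(1,2)] by (auto simp: bij_betw_def)
  have "f x \<in> B" using assms(1) x by (auto simp: bij_betw_def)
  moreover have "inv_into A (f' \<circ> f) ((f' \<circ> f) x) = x"
    by (rule inv_into_f_f) (use bij_betw_trans[OF assms(1,2)] x in \<open>auto simp: bij_betw_def\<close>)
  ultimately show ?thesis using x assms(1,2) by (simp add: bij_betw_def)
qed

lemma iso_trans:
  assumes closed: "incidence_closed K" and i1: "iso G H f g" and i2: "iso H K f' g'"
  shows "iso G K (f' \<circ> f) (g' \<circ> g)"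
proof -
  have bf: "bij_betw f (gV G) (gV H)" and bg: "bij_betw g (gE G) (gE H)"
    and bf': "bij_betw f' (gV H) (gV K)" and bg': "bij_betw g' (gE H) (gE K)"
    using i1 i2 by (auto simp: iso_def)
  have "morph K G (inv_into (gV G) f \<circ> inv_into (gV H) f') (inv_into (gE G) g \<circ> inv_into (gE H) g')"
    using morph_comp i1 i2 by (auto simp: iso_def)
  then have "morph K G (inv_into (gV G) (f' \<circ> f)) (inv_into (gE G) (g' \<circ> g))"
    by (rule morph_cong[OF closed]) (simp_all add: inv_into_comp_on[OF bf bf'] inv_into_comp_on[OF bg bg'])
  then show ?thesis
    using morph_comp i1 i2 bij_betw_trans[OF bf bf'] bij_betw_trans[OF bg bg'] by (auto simp: iso_def)
qed

lemma iso_node_attrs: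
  assumes i: "iso G H f g" and v: "v \<in> gV G"
  shows "glab H (f v) = glab G v \<and> groot H (f v) = groot G v"
proof -
  have m: "morph G H f g" and m_inv: "morph H G (inv_into (gV G) f) (inv_into (gE G) g)"
    and b: "bij_betw f (gV G) (gV H)" using i by (auto simp: iso_def)
  have fv: "f v \<in> gV H" and inv: "inv_into (gV G) f (f v) = v" using b v by (auto simp: bij_betw_def)
  have "glab G v \<noteq> None \<Longrightarrow> glab H (f v) = glab G v" "groot G v \<noteq> None \<Longrightarrow> groot H (f v) = groot G v"
    using m v by (auto simp: morph_def)
  moreover have "glab H (f v) \<noteq> None \<Longrightarrow> glab G v = glab H (f v)"
    "groot H (f v) \<noteq> None \<Longrightarrow> groot G v = groot H (f v)"
    using m_inv fv inv unfolding morph_def by metis+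
  ultimately show ?thesis by fastforce
qed

lemma iso_edge_attrs:
  "iso G H f g \<Longrightarrow> e \<in> gE G \<Longrightarrow>
    gsrc H (g e) = f (gsrc G e) \<and> gtgt H (g e) = f (gtgt G e) \<and> gmrk H (g e) = gmrk G e"
  by (auto simp: iso_def morph_def)

lemma iso_nodes_empty_iff: "iso G H f g \<Longrightarrow> gV G = {} \<longleftrightarrow> gV H = {}"
  by (auto simp: iso_def bij_betw_def)

lemma iso_cong_target:
  assumes "gV A = gV B" "gE A = gE B"
    and "\<forall>e\<in>gE A. gsrc A e = gsrc B e \<and> gtgt A e = gtgt B e \<and> gmrk A e = gmrk B e"
    and "\<forall>v\<in>gV A. glab A v = glab B v \<and> groot A v = groot B v"
    and "iso H A f g"
  shows "iso H B f g"
  using assms unfolding iso_def morph_def by (auto simp: image_subset_iff)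

lemma tlrg_mem_cls: "tlrg LV LE G \<Longrightarrow> G \<in> cls LV LE G"
  using iso_refl[OF tlrg_incidence_closed] unfolding cls_def isomorphic_def by blast

section \<open>Rule application\<close>

lemma app_res_nodes:
  "gV (app_res G r fV fE) = (\<lambda>x. 2 * x) ` (gV G - fV ` (gV (lhs r) - gV (intf r)))
     \<union> (\<lambda>v. Suc (2 * v)) ` (gV (rhs r) - gV (intf r))"
  by (simp add: app_res_def Let_def)

lemma app_res_edges:
  "gE (app_res G r fV fE) = (\<lambda>x. 2 * x) ` (gE G - fE ` (gE (lhs r) - gE (intf r)))
     \<union> (\<lambda>e. Suc (2 * e)) ` (gE (rhs r) - gE (intf r))"
  by (simp add: app_res_def Let_def)

lemma app_res_even:
  "gsrc (app_res G r fV fE) (2 * x) = 2 * gsrc G x"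
  "gtgt (app_res G r fV fE) (2 * x) = 2 * gtgt G x"
  "gmrk (app_res G r fV fE) (2 * x) = gmrk G x"
  "glab (app_res G r fV fE) (2 * x) =
     (if x \<in> fV ` gV (intf r) \<and> glab (intf r) (the_inv_into (gV (intf r)) fV x) = None
      then glab (rhs r) (the_inv_into (gV (intf r)) fV x) else glab G x)"
  "groot (app_res G r fV fE) (2 * x) =
     (if x \<in> fV ` gV (intf r) \<and> groot (intf r) (the_inv_into (gV (intf r)) fV x) = None
      then groot (rhs r) (the_inv_into (gV (intf r)) fV x) else groot G x)"
  by (simp_all add: app_res_def Let_def)

lemma app_res_odd:
  "gsrc (app_res G r fV fE) (Suc (2 * y)) =
     (if gsrc (rhs r) y \<in> gV (intf r) then 2 * fV (gsrc (rhs r) y) else Suc (2 * gsrc (rhs r) y))"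
  "gtgt (app_res G r fV fE) (Suc (2 * y)) =
     (if gtgt (rhs r) y \<in> gV (intf r) then 2 * fV (gtgt (rhs r) y) else Suc (2 * gtgt (rhs r) y))"
  "gmrk (app_res G r fV fE) (Suc (2 * y)) = gmrk (rhs r) y"
  "glab (app_res G r fV fE) (Suc (2 * y)) = glab (rhs r) y"
  "groot (app_res G r fV fE) (Suc (2 * y)) = groot (rhs r) y"
  by (simp_all add: app_res_def Let_def)

definition closed_rule :: "('lv, 'le) lrule \<Rightarrow> bool" where
  "closed_rule r \<longleftrightarrow> incidence_closed (lhs r) \<and> incidence_closed (rhs r) \<and>
     incidence_closed (intf r) \<and> subgraph (intf r) (lhs r) \<and> subgraph (intf r) (rhs r)"

lemma wf_rule_closed_rule: "wf_rule LV LE r \<Longrightarrow> closed_rule r"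
  by (auto simp: wf_rule_def closed_rule_def tlrg_def intro: graph_over_incidence_closed)

lemma closed_ruleD:
  assumes "closed_rule r"
  shows "incidence_closed (lhs r)" "incidence_closed (rhs r)" "incidence_closed (intf r)"
    "subgraph (intf r) (lhs r)" "subgraph (intf r) (rhs r)"
    "gV (intf r) \<subseteq> gV (lhs r)" "gV (intf r) \<subseteq> gV (rhs r)"
    "gE (intf r) \<subseteq> gE (lhs r)" "gE (intf r) \<subseteq> gE (rhs r)"
  using assms by (auto simp: closed_rule_def subgraph_def)

lemma incidence_closed_app_res:
  assumes closed_G: "incidence_closed G" and r: "closed_rule r" and m: "is_match r G fV fE"
  shows "incidence_closed (app_res G r fV fE)"
proof -
  let ?L = "lhs r" and ?K = "intf r" and ?R = "rhs r" and ?H = "app_res G r fV fE"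
  let ?deleted = "fV ` (gV ?L - gV ?K)"
  have mo: "morph ?L G fV fE" and inj: "inj_on fV (gV ?L)"
    and dangling: "\<forall>e\<in>gE G - fE ` gE ?L. gsrc G e \<notin> ?deleted \<and> gtgt G e \<notin> ?deleted"
    using m by (auto simp: is_match_def)
  note KLR = closed_ruleD[OF r]
  have kept_node: "2 * fV v \<in> gV ?H" if "v \<in> gV ?K" for v
  proof -
    have "fV v \<in> gV G" using mo that KLR(6) unfolding morph_def by blast
    moreover have "fV v \<notin> ?deleted" using that KLR inj by (auto simp: inj_on_def)
    ultimately show ?thesis by (simp add: app_res_nodes)
  qed
  text \<open>Surviving edges of G keep their endpoints: either they lie in the image of an
    interface edge, or the dangling condition applies.\<close>
  have kept_endpoints: "gsrc G x \<in> gV G - ?deleted \<and> gtgt G x \<in> gV G - ?deleted"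
    if x: "x \<in> gE G" "x \<notin> fE ` (gE ?L - gE ?K)" for x
  proof (cases "x \<in> fE ` gE ?L")
    case True
    then obtain e where e: "e \<in> gE ?K" "x = fE e" using x by auto
    have "gsrc ?K e \<in> gV ?K" "gtgt ?K e \<in> gV ?K"
      using KLR e by (auto simp: incidence_closed_def)
    moreover have "gsrc G x = fV (gsrc ?K e)" "gtgt G x = fV (gtgt ?K e)"
      using mo e KLR by (auto simp: morph_def subgraph_def)
    ultimately show ?thesis using KLR inj x closed_G by (auto simp: inj_on_def incidence_closed_def)
  next
    case False
    then show ?thesis using dangling x closed_G by (auto simp: incidence_closed_def)
  qed
  show ?thesis unfolding incidence_closed_def
  proof
    fix y assume y: "y \<in> gE ?H"
    show "gsrc ?H y \<in> gV ?H \<and> gtgt ?H y \<in> gV ?H"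
    proof (cases "even y")
      case True
      then obtain x where "x \<in> gE G" "x \<notin> fE ` (gE ?L - gE ?K)" "y = 2 * x"
        using y by (auto simp: app_res_edges)
      then show ?thesis using kept_endpoints by (auto simp: app_res_even app_res_nodes)
    next
      case False
      then obtain e where e: "e \<in> gE ?R" "y = Suc (2 * e)" using y by (auto simp: app_res_edges)
      have "gsrc ?R e \<in> gV ?R" "gtgt ?R e \<in> gV ?R" using KLR e by (auto simp: incidence_closed_def)
      then show ?thesis using kept_node e by (auto simp: app_res_odd app_res_nodes)
    qed
  qed
qed

section \<open>Normal forms of rules\<close>

lemma rule_nf_simps [simp]:
  "lhs (rule_nf r) = lhs r" "rhs (rule_nf r) = rhs r"
  "gV (intf (rule_nf r)) = gV (intf r)" "gE (intf (rule_nf r)) = {}"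
  "glab (intf (rule_nf r)) = (\<lambda>_. None)" "groot (intf (rule_nf r)) = (\<lambda>_. None)"
  "gsrc (intf (rule_nf r)) = gsrc (intf r)" "gtgt (intf (rule_nf r)) = gtgt (intf r)"
  by (simp_all add: rule_nf_def)

lemma is_match_rule_nf: "is_match (rule_nf r) G fV fE \<longleftrightarrow> is_match r G fV fE"
  by (simp add: is_match_def)

lemma closed_rule_rule_nf: "closed_rule r \<Longrightarrow> closed_rule (rule_nf r)"
  by (auto simp: closed_rule_def incidence_closed_def subgraph_def)

definition nf_edge_map :: "('lv, 'le) lrule \<Rightarrow> (nat \<Rightarrow> nat) \<Rightarrow> nat \<Rightarrow> nat" where
  "nf_edge_map r fE y = (if odd y \<and> y div 2 \<in> gE (intf r) then 2 * fE (y div 2) else y)"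

lemma nf_edge_map_simps [simp]:
  "nf_edge_map r fE (2 * x) = 2 * x"
  "nf_edge_map r fE (Suc (2 * e)) = (if e \<in> gE (intf r) then 2 * fE e else Suc (2 * e))"
  by (simp_all add: nf_edge_map_def)

lemma inj_on_nf_edge_map:
  assumes r: "closed_rule r" and m: "is_match r G fV fE"
  shows "inj_on (nf_edge_map r fE) (gE (app_res G (rule_nf r) fV fE))"
proof (rule inj_onI)
  fix y1 y2 assume "y1 \<in> gE (app_res G (rule_nf r) fV fE)" "y2 \<in> gE (app_res G (rule_nf r) fV fE)"
    and eq: "nf_edge_map r fE y1 = nf_edge_map r fE y2"
  then have y: "y1 \<in> (\<lambda>x. 2 * x) ` (gE G - fE ` gE (lhs r)) \<union> (\<lambda>e. Suc (2 * e)) ` gE (rhs r)"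
    "y2 \<in> (\<lambda>x. 2 * x) ` (gE G - fE ` gE (lhs r)) \<union> (\<lambda>e. Suc (2 * e)) ` gE (rhs r)"
    by (simp_all add: app_res_edges)
  have KL: "gE (intf r) \<subseteq> gE (lhs r)" by (rule closed_ruleD(8)[OF r])
  have inj_K: "inj_on fE (gE (intf r))" using m KL by (auto simp: is_match_def intro: inj_on_subset)
  from y show "y1 = y2"
  proof (elim UnE imageE)
    fix e1 e2 assume y1: "y1 = Suc (2 * e1)" and y2: "y2 = Suc (2 * e2)"
    have "(if e1 \<in> gE (intf r) then 2 * fE e1 else Suc (2 * e1)) =
        (if e2 \<in> gE (intf r) then 2 * fE e2 else Suc (2 * e2))" using eq unfolding y1 y2 by simp
    then show ?thesis unfolding y1 y2 by (auto split: if_splits dest: inj_onD[OF inj_K]) presburger+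
  qed (use eq KL in \<open>auto simp: nf_edge_map_def split: if_splits; presburger\<close>)+
qed

text \<open>Each interface edge is re-created by the normal form as a fresh copy (odd identifier);
  the map sends the copy back to the image of the edge, which the rule itself keeps.\<close>
lemma image_nf_edge_map:
  assumes r: "closed_rule r" and m: "is_match r G fV fE"
  shows "nf_edge_map r fE ` gE (app_res G (rule_nf r) fV fE) = gE (app_res G r fV fE)"
    (is "?psi ` gE ?B = gE ?A")
proof -
  let ?L = "lhs r" and ?K = "intf r" and ?R = "rhs r"
  note KLR = closed_ruleD[OF r]
  have edges_B: "gE ?B = (\<lambda>x. 2 * x) ` (gE G - fE ` gE ?L) \<union> (\<lambda>e. Suc (2 * e)) ` gE ?R"
    by (simp add: app_res_edges)
  have edges_A: "gE ?A = (\<lambda>x. 2 * x) ` (gE G - fE ` (gE ?L - gE ?K)) \<union> (\<lambda>e. Suc (2 * e)) ` (gE ?R - gE ?K)"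
    by (simp add: app_res_edges)
  have fE_K: "fE e \<in> gE G" "fE e \<notin> fE ` (gE ?L - gE ?K)" if "e \<in> gE ?K" for e
  proof -
    show "fE e \<in> gE G" using m that KLR(8) unfolding is_match_def morph_def by blast
    show "fE e \<notin> fE ` (gE ?L - gE ?K)" using m that KLR(8) by (auto simp: is_match_def inj_on_def)
  qed
  show ?thesis
  proof (intro equalityI subsetI)
    fix z assume "z \<in> ?psi ` gE ?B"
    then obtain y where y: "y \<in> gE ?B" "z = ?psi y" by blast
    from y(1) show "z \<in> gE ?A" unfolding edges_B
    proof (elim UnE imageE)
      fix e assume "e \<in> gE ?R" "y = Suc (2 * e)"
      then show ?thesis using y(2) fE_K unfolding edges_A by (auto split: if_splits)
    qed (use y(2) in \<open>auto simp: edges_A\<close>)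
  next
    fix z assume "z \<in> gE ?A"
    then show "z \<in> ?psi ` gE ?B" unfolding edges_A
    proof (elim UnE imageE DiffE)
      fix x assume x: "z = 2 * x" "x \<in> gE G" "x \<notin> fE ` (gE ?L - gE ?K)"
      show ?thesis
      proof (cases "x \<in> fE ` gE ?L")
        case True
        then obtain e where "e \<in> gE ?K" "x = fE e" using x(3) by blast
        then have "z = ?psi (Suc (2 * e))" "Suc (2 * e) \<in> gE ?B" using x(1) KLR(9) unfolding edges_B by auto
        then show ?thesis by blast
      next
        case False
        then have "z = ?psi (2 * x)" "2 * x \<in> gE ?B" using x unfolding edges_B by auto
        then show ?thesis by blast
      qed
    next
      fix e assume "z = Suc (2 * e)" "e \<in> gE ?R" "e \<notin> gE ?K"
      then have "z = ?psi (Suc (2 * e))" "Suc (2 * e) \<in> gE ?B" unfolding edges_B by auto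
      then show ?thesis by blast
    qed
  qed
qed

text \<open>Node labels agree because wherever the interface is labelled, G already carries the
  label of the right-hand side.\<close>
lemma app_res_rule_nf_iso:
  assumes closed_G: "incidence_closed G" and r: "closed_rule r" and m: "is_match r G fV fE"
  shows "iso (app_res G (rule_nf r) fV fE) (app_res G r fV fE) id (nf_edge_map r fE)"
    (is "iso ?B ?A id ?psi")
proof -
  let ?L = "lhs r" and ?K = "intf r" and ?R = "rhs r"
  have mo: "morph ?L G fV fE" and inj_V: "inj_on fV (gV ?L)" using m by (auto simp: is_match_def)
  note KLR = closed_ruleD[OF r]
  have edges: "gsrc ?A (?psi y) = id (gsrc ?B y) \<and> gtgt ?A (?psi y) = id (gtgt ?B y)
      \<and> gmrk ?A (?psi y) = gmrk ?B y" if "y \<in> gE ?B" for y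
    using that unfolding app_res_edges rule_nf_simps Diff_empty
  proof (elim UnE imageE DiffE)
    fix e assume e: "e \<in> gE ?R" "y = Suc (2 * e)"
    show ?thesis
    proof (cases "e \<in> gE ?K")
      case True
      have "gsrc ?K e \<in> gV ?K" "gtgt ?K e \<in> gV ?K" using KLR True by (auto simp: incidence_closed_def)
      moreover have "gsrc G (fE e) = fV (gsrc ?K e)" "gtgt G (fE e) = fV (gtgt ?K e)"
          "gmrk G (fE e) = gmrk ?K e"
        using mo True KLR by (auto simp: morph_def subgraph_def)
      moreover have "gsrc ?R e = gsrc ?K e" "gtgt ?R e = gtgt ?K e" "gmrk ?R e = gmrk ?K e"
        using KLR True by (auto simp: subgraph_def)
      ultimately show ?thesis using e True by (simp add: app_res_even app_res_odd)
    qed (use e in \<open>simp add: app_res_odd\<close>)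
  qed (auto simp: app_res_even)
  have nodes: "glab ?A (id v) = glab ?B v \<and> groot ?A (id v) = groot ?B v" if "v \<in> gV ?B" for v
    using that unfolding app_res_nodes rule_nf_simps
  proof (elim UnE imageE)
    fix x assume x: "v = 2 * x"
    show ?thesis
    proof (cases "x \<in> fV ` gV ?K")
      case True
      then obtain u where u: "u \<in> gV ?K" "x = fV u" by blast
      have "the_inv_into (gV ?K) fV x = u"
        using u inj_on_subset[OF inj_V KLR(6)] by (simp add: the_inv_into_f_f)
      moreover have "glab ?K u \<noteq> None \<Longrightarrow> glab G (fV u) = glab ?R u"
          "groot ?K u \<noteq> None \<Longrightarrow> groot G (fV u) = groot ?R u"
        using u mo KLR by (auto simp: morph_def subgraph_def)
      ultimately show ?thesis using x u by (auto simp: app_res_even)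
    qed (simp add: x app_res_even)
  qed (auto simp: app_res_odd)
  have "incidence_closed ?B"
    using incidence_closed_app_res[OF closed_G closed_rule_rule_nf[OF r]] m by (simp add: is_match_rule_nf)
  then show ?thesis
    by (rule isoI[OF _ _ inj_on_nf_edge_map[OF r m] _ image_nf_edge_map[OF r m] edges nodes])
      (auto simp: app_res_nodes)
qed

section \<open>Transfer along isomorphic normal forms\<close>

definition relabel_odd :: "(nat \<Rightarrow> nat) \<Rightarrow> nat \<Rightarrow> nat" where
  "relabel_odd h y = (if even y then y else Suc (2 * h (y div 2)))"

lemma relabel_odd_simps [simp]:
  "relabel_odd h (2 * x) = 2 * x" "relabel_odd h (Suc (2 * x)) = Suc (2 * h x)"
  by (simp_all add: relabel_odd_def)

lemma image_relabel_odd: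
  "relabel_odd h ` ((\<lambda>x. 2 * x) ` B \<union> (\<lambda>x. Suc (2 * x)) ` A)
     = (\<lambda>x. 2 * x) ` B \<union> (\<lambda>x. Suc (2 * x)) ` (h ` A)"
  by (simp add: image_Un image_image)

lemma inj_on_relabel_odd:
  assumes "inj_on h A"
  shows "inj_on (relabel_odd h) ((\<lambda>x. 2 * x) ` B \<union> (\<lambda>x. Suc (2 * x)) ` A)"
proof (rule inj_onI)
  fix y1 y2 assume y1: "y1 \<in> (\<lambda>x. 2 * x) ` B \<union> (\<lambda>x. Suc (2 * x)) ` A"
    and y2: "y2 \<in> (\<lambda>x. 2 * x) ` B \<union> (\<lambda>x. Suc (2 * x)) ` A" and eq: "relabel_odd h y1 = relabel_odd h y2"
  have "even (relabel_odd h y) = even y" for y by (simp add: relabel_odd_def)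
  then have parity: "even y1 = even y2" using eq by metis
  show "y1 = y2"
  proof (cases "even y1")
    case True
    then show ?thesis using eq parity by (simp add: relabel_odd_def)
  next
    case False
    then obtain x1 x2 where "x1 \<in> A" "x2 \<in> A" "y1 = Suc (2 * x1)" "y2 = Suc (2 * x2)"
      using y1 y2 parity by auto
    then show ?thesis using eq assms by (auto dest: inj_onD)
  qed
qed

lemma lhs_iso_transfer_images:
  assumes i: "iso L1 L2 fV fE" and K1: "K1 \<subseteq> gV L1" and K2: "K2 \<subseteq> gV L2" and K: "fV ` K1 = K2"
  shows "(g \<circ> inv_into (gV L1) fV) ` (gV L2 - K2) = g ` (gV L1 - K1)"
    and "(g \<circ> inv_into (gV L1) fV) ` K2 = g ` K1"
    and "(h \<circ> inv_into (gE L1) fE) ` gE L2 = h ` gE L1"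
proof -
  have bV: "bij_betw fV (gV L1) (gV L2)" and bE: "bij_betw fE (gE L1) (gE L2)"
    using i by (auto simp: iso_def)
  have inv_K: "inv_into (gV L1) fV ` K2 = K1"
    using inv_into_image_cancel[OF bij_betw_imp_inj_on[OF bV] K1] K by simp
  have "inv_into (gV L1) fV ` (gV L2 - K2) = inv_into (gV L1) fV ` gV L2 - inv_into (gV L1) fV ` K2"
    using bij_betw_inv_into[OF bV] K2 by (intro inj_on_image_set_diff) (auto simp: bij_betw_def)
  also have "\<dots> = gV L1 - K1" using bij_betw_inv_into[OF bV] inv_K by (simp add: bij_betw_def)
  finally show "(g \<circ> inv_into (gV L1) fV) ` (gV L2 - K2) = g ` (gV L1 - K1)"
    unfolding image_comp[symmetric] by simp
  show "(g \<circ> inv_into (gV L1) fV) ` K2 = g ` K1" unfolding image_comp[symmetric] inv_K ..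
  show "(h \<circ> inv_into (gE L1) fE) ` gE L2 = h ` gE L1"
    using bij_betw_inv_into[OF bE] unfolding image_comp[symmetric] by (simp add: bij_betw_def)
qed

text \<open>Composing a match with the inverse of a left-hand side isomorphism gives a match of
  the other rule; its dangling condition holds because both rules delete the same nodes.\<close>
lemma is_match_transfer:
  assumes r1: "closed_rule r1" and r2: "closed_rule r2"
    and i: "iso (lhs r1) (lhs r2) fV fE" and K: "fV ` gV (intf r1) = gV (intf r2)"
    and m: "is_match r1 G fV1 fE1"
  shows "is_match r2 G (fV1 \<circ> inv_into (gV (lhs r1)) fV) (fE1 \<circ> inv_into (gE (lhs r1)) fE)"
  unfolding is_match_def
proof (intro conjI)
  have bV: "bij_betw fV (gV (lhs r1)) (gV (lhs r2))" and bE: "bij_betw fE (gE (lhs r1)) (gE (lhs r2))"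
    and m_inv: "morph (lhs r2) (lhs r1) (inv_into (gV (lhs r1)) fV) (inv_into (gE (lhs r1)) fE)"
    using i by (auto simp: iso_def)
  show "morph (lhs r2) G (fV1 \<circ> inv_into (gV (lhs r1)) fV) (fE1 \<circ> inv_into (gE (lhs r1)) fE)"
    using morph_comp[OF m_inv] m by (simp add: is_match_def)
  show "inj_on (fV1 \<circ> inv_into (gV (lhs r1)) fV) (gV (lhs r2))"
    using bij_betw_inv_into[OF bV] m by (intro comp_inj_on) (auto simp: bij_betw_def is_match_def)
  show "inj_on (fE1 \<circ> inv_into (gE (lhs r1)) fE) (gE (lhs r2))"
    using bij_betw_inv_into[OF bE] m by (intro comp_inj_on) (auto simp: bij_betw_def is_match_def)
  show "\<forall>e\<in>gE G - (fE1 \<circ> inv_into (gE (lhs r1)) fE) ` gE (lhs r2).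
      gsrc G e \<notin> (fV1 \<circ> inv_into (gV (lhs r1)) fV) ` (gV (lhs r2) - gV (intf r2)) \<and>
      gtgt G e \<notin> (fV1 \<circ> inv_into (gV (lhs r1)) fV) ` (gV (lhs r2) - gV (intf r2))"
    using m unfolding lhs_iso_transfer_images[OF i closed_ruleD(6)[OF r1] closed_ruleD(6)[OF r2] K]
    by (simp add: is_match_def)
qed

text \<open>Normal forms have no interface edges, so both results consist of the untouched part
  of G (even identifiers, fixed by the isomorphism) and a copy of the right-hand side (odd
  identifiers), which the right-hand side isomorphism relabels.\<close>
lemma app_res_rule_nf_transfer:
  assumes closed_G: "incidence_closed G" and r1: "closed_rule r1" and r2: "closed_rule r2"
    and ri: "rule_iso (rule_nf r1) (rule_nf r2)" and m1: "is_match r1 G fV1 fE1"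
  obtains fV2 fE2 phi psi where "is_match r2 G fV2 fE2"
    and "iso (app_res G (rule_nf r1) fV1 fE1) (app_res G (rule_nf r2) fV2 fE2) phi psi"
proof -
  let ?L1 = "lhs r1" and ?K1 = "intf r1" and ?R1 = "rhs r1"
  let ?L2 = "lhs r2" and ?K2 = "intf r2" and ?R2 = "rhs r2"
  obtain fV fE hV hE where iL: "iso ?L1 ?L2 fV fE" and iR: "iso ?R1 ?R2 hV hE"
    and fh: "\<forall>v\<in>gV ?K1. fV v = hV v" and fK: "fV ` gV ?K1 = gV ?K2"
    using ri unfolding rule_iso_def by auto
  note K1 = closed_ruleD[OF r1] and K2 = closed_ruleD[OF r2]
  define fV2 where "fV2 = fV1 \<circ> inv_into (gV ?L1) fV"
  define fE2 where "fE2 = fE1 \<circ> inv_into (gE ?L1) fE"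
  have m2: "is_match r2 G fV2 fE2"
    unfolding fV2_def fE2_def by (rule is_match_transfer[OF r1 r2 iL fK m1])
  note transfer = lhs_iso_transfer_images(1,2)[where g = fV1, OF iL K1(6) K2(6) fK, folded fV2_def]
    lhs_iso_transfer_images(3)[where h = fE1, OF iL K1(6) K2(6) fK, folded fE2_def]
  have bR: "bij_betw hV (gV ?R1) (gV ?R2)" "bij_betw hE (gE ?R1) (gE ?R2)"
    using iR by (auto simp: iso_def)
  have hK: "hV ` gV ?K1 = gV ?K2" using fK fh by (metis image_cong)
  have hR_diff: "hV ` (gV ?R1 - gV ?K1) = gV ?R2 - gV ?K2"
    using inj_on_image_set_diff[OF bij_betw_imp_inj_on[OF bR(1)] _ K1(7)] bR(1) hK
    by (simp add: bij_betw_def)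
  have fV2_fV: "fV2 (fV u) = fV1 u" if "u \<in> gV ?L1" for u
    using that iL by (simp add: fV2_def iso_def bij_betw_def)
  let ?A1 = "app_res G (rule_nf r1) fV1 fE1" and ?A2 = "app_res G (rule_nf r2) fV2 fE2"
  have nodes_A1: "gV ?A1 = (\<lambda>x. 2 * x) ` (gV G - fV1 ` (gV ?L1 - gV ?K1)) \<union> (\<lambda>x. Suc (2 * x)) ` (gV ?R1 - gV ?K1)"
    by (simp add: app_res_nodes)
  have nodes_A2: "gV ?A2 = (\<lambda>x. 2 * x) ` (gV G - fV1 ` (gV ?L1 - gV ?K1)) \<union> (\<lambda>x. Suc (2 * x)) ` (hV ` (gV ?R1 - gV ?K1))"
    by (simp add: app_res_nodes transfer hR_diff)
  have edges_A1: "gE ?A1 = (\<lambda>x. 2 * x) ` (gE G - fE1 ` gE ?L1) \<union> (\<lambda>x. Suc (2 * x)) ` gE ?R1"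
    by (simp add: app_res_edges)
  have edges_A2: "gE ?A2 = (\<lambda>x. 2 * x) ` (gE G - fE1 ` gE ?L1) \<union> (\<lambda>x. Suc (2 * x)) ` (hE ` gE ?R1)"
    using bR(2) by (simp add: app_res_edges transfer bij_betw_def)
  have attach: "(if hV s \<in> gV ?K2 then 2 * fV2 (hV s) else Suc (2 * hV s)) =
      relabel_odd hV (if s \<in> gV ?K1 then 2 * fV1 s else Suc (2 * s))" if "s \<in> gV ?R1" for s
  proof (cases "s \<in> gV ?K1")
    case True
    then have "hV s = fV s" "fV s \<in> gV ?K2" "s \<in> gV ?L1" using fh fK K1(6) by auto
    then show ?thesis using True fV2_fV by simp
  next
    case False
    then have "hV s \<notin> gV ?K2"
      using that hK K1(7) bij_betw_imp_inj_on[OF bR(1)] by (auto simp: inj_on_def)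
    then show ?thesis using False by simp
  qed
  have edges: "gsrc ?A2 (relabel_odd hE y) = relabel_odd hV (gsrc ?A1 y) \<and>
      gtgt ?A2 (relabel_odd hE y) = relabel_odd hV (gtgt ?A1 y) \<and>
      gmrk ?A2 (relabel_odd hE y) = gmrk ?A1 y" if "y \<in> gE ?A1" for y
    using that unfolding edges_A1
  proof (elim UnE imageE)
    fix e assume e: "e \<in> gE ?R1" "y = Suc (2 * e)"
    have "gsrc ?R1 e \<in> gV ?R1" "gtgt ?R1 e \<in> gV ?R1" using K1(2) e by (auto simp: incidence_closed_def)
    then show ?thesis
      unfolding e(2) relabel_odd_simps app_res_odd rule_nf_simps
      by (simp only: iso_edge_attrs[OF iR e(1)] attach simp_thms)
  qed (simp add: app_res_even)
  have nodes: "glab ?A2 (relabel_odd hV v) = glab ?A1 v \<and> groot ?A2 (relabel_odd hV v) = groot ?A1 v"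
    if "v \<in> gV ?A1" for v
    using that unfolding nodes_A1
  proof (elim UnE imageE)
    fix x assume x: "v = 2 * x"
    show ?thesis
    proof (cases "x \<in> fV1 ` gV ?K1")
      case True
      then obtain u where u: "u \<in> gV ?K1" "x = fV1 u" by blast
      have "the_inv_into (gV ?K1) fV1 x = u"
        using u m1 K1(6) by (auto simp: is_match_def intro: the_inv_into_f_f inj_on_subset)
      moreover have "the_inv_into (gV ?K2) fV2 x = hV u"
      proof -
        have hu: "hV u = fV u" using u fh by simp
        have "fV u \<in> gV ?K2" "fV2 (fV u) = x" using u fK fV2_fV K1(6) by blast+
        moreover have "inj_on fV2 (gV ?K2)" using m2 K2(6) by (auto simp: is_match_def intro: inj_on_subset)
        ultimately show ?thesis unfolding hu by (metis the_inv_into_f_f)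
      qed
      ultimately show ?thesis
        using x True transfer(2) iso_node_attrs[OF iR] u K1(7) by (auto simp: app_res_even)
    qed (use x transfer(2) in \<open>simp add: app_res_even\<close>)
  next
    fix w assume "w \<in> gV ?R1 - gV ?K1" "v = Suc (2 * w)"
    then show ?thesis using iso_node_attrs[OF iR] by (simp add: app_res_odd)
  qed
  have "incidence_closed ?A1"
    using incidence_closed_app_res[OF closed_G closed_rule_rule_nf[OF r1]] m1 by (simp add: is_match_rule_nf)
  then have "iso ?A1 ?A2 (relabel_odd hV) (relabel_odd hE)"
  proof (rule isoI[OF _ _ _ _ _ edges nodes])
    show "inj_on (relabel_odd hV) (gV ?A1)" "inj_on (relabel_odd hE) (gE ?A1)"
      unfolding nodes_A1 edges_A1 using bR
      by (auto intro!: inj_on_relabel_odd inj_on_subset[of hV "gV ?R1"] simp: bij_betw_def)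
    show "relabel_odd hV ` gV ?A1 = gV ?A2" "relabel_odd hE ` gE ?A1 = gE ?A2"
      unfolding nodes_A1 nodes_A2 edges_A1 edges_A2 image_relabel_odd by simp_all
  qed
  then show ?thesis using m2 that by blast
qed

section \<open>The chain of implications\<close>

lemma rule_iso_refl: "closed_rule r \<Longrightarrow> rule_iso r r"
  unfolding rule_iso_def
  by (rule exI[of _ id], rule exI[of _ id], rule exI[of _ id], rule exI[of _ id])
     (auto simp: closed_rule_def intro: iso_refl)

lemma inv_into_agree:
  assumes "inj_on f A" "inj_on h B" "K \<subseteq> A" "K \<subseteq> B" "\<forall>x\<in>K. f x = h x" "x \<in> K"
  shows "inv_into A f (f x) = x \<and> inv_into B h (f x) = x"
proof -
  have "x \<in> A" "x \<in> B" "h x = f x" using assms(3-6) by auto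
  then show ?thesis using inv_into_f_f[OF assms(1)] inv_into_f_f[OF assms(2)] by metis
qed

lemma rule_iso_sym:
  assumes r1: "closed_rule r1" and ri: "rule_iso r1 r2"
  shows "rule_iso r2 r1"
proof -
  let ?L1 = "lhs r1" and ?K1 = "intf r1" and ?R1 = "rhs r1"
  let ?L2 = "lhs r2" and ?K2 = "intf r2" and ?R2 = "rhs r2"
  obtain fV fE hV hE where iL: "iso ?L1 ?L2 fV fE" and iR: "iso ?R1 ?R2 hV hE"
    and fh: "\<forall>v\<in>gV ?K1. fV v = hV v" and fhE: "\<forall>e\<in>gE ?K1. fE e = hE e"
    and fK: "fV ` gV ?K1 = gV ?K2" and fKE: "fE ` gE ?K1 = gE ?K2"
    and lab: "\<forall>v\<in>gV ?K1. glab ?K2 (fV v) = glab ?K1 v \<and> groot ?K2 (fV v) = groot ?K1 v"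
    using ri unfolding rule_iso_def by (elim exE conjE) (rule that; assumption)
  note K1 = closed_ruleD[OF r1]
  have injV: "inj_on fV (gV ?L1)" "inj_on hV (gV ?R1)" and injE: "inj_on fE (gE ?L1)" "inj_on hE (gE ?R1)"
    using iL iR by (auto simp: iso_def bij_betw_def)
  note invV = inv_into_agree[OF injV K1(6,7) fh] and invE = inv_into_agree[OF injE K1(8,9) fhE]
  have "iso ?L2 ?L1 (inv_into (gV ?L1) fV) (inv_into (gE ?L1) fE)" by (rule iso_sym[OF K1(1) iL])
  moreover have "iso ?R2 ?R1 (inv_into (gV ?R1) hV) (inv_into (gE ?R1) hE)" by (rule iso_sym[OF K1(2) iR])
  moreover have "\<forall>v\<in>gV ?K2. inv_into (gV ?L1) fV v = inv_into (gV ?R1) hV v \<and>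
      glab ?K1 (inv_into (gV ?L1) fV v) = glab ?K2 v \<and> groot ?K1 (inv_into (gV ?L1) fV v) = groot ?K2 v"
  proof
    fix v assume "v \<in> gV ?K2"
    then obtain u where "u \<in> gV ?K1" "v = fV u" using fK by blast
    then show "inv_into (gV ?L1) fV v = inv_into (gV ?R1) hV v \<and>
        glab ?K1 (inv_into (gV ?L1) fV v) = glab ?K2 v \<and> groot ?K1 (inv_into (gV ?L1) fV v) = groot ?K2 v"
      using invV lab by simp
  qed
  moreover have "\<forall>e\<in>gE ?K2. inv_into (gE ?L1) fE e = inv_into (gE ?R1) hE e"
  proof
    fix e assume "e \<in> gE ?K2"
    then obtain u where "u \<in> gE ?K1" "e = fE u" using fKE by blast
    then show "inv_into (gE ?L1) fE e = inv_into (gE ?R1) hE e" using invE by simp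
  qed
  moreover have "inv_into (gV ?L1) fV ` gV ?K2 = gV ?K1" "inv_into (gE ?L1) fE ` gE ?K2 = gE ?K1"
    using inv_into_image_cancel[OF injV(1) K1(6)] inv_into_image_cancel[OF injE(1) K1(8)] fK fKE
    by simp_all
  ultimately show ?thesis unfolding rule_iso_def by blast
qed

lemma rule_iso_trans:
  assumes r3: "closed_rule r3" and ri1: "rule_iso r1 r2" and ri2: "rule_iso r2 r3"
  shows "rule_iso r1 r3"
proof -
  obtain fV fE hV hE where iL: "iso (lhs r1) (lhs r2) fV fE" and iR: "iso (rhs r1) (rhs r2) hV hE"
    and fh: "\<forall>v\<in>gV (intf r1). fV v = hV v" and fhE: "\<forall>e\<in>gE (intf r1). fE e = hE e"
    and fK: "fV ` gV (intf r1) = gV (intf r2)" and fKE: "fE ` gE (intf r1) = gE (intf r2)"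
    and lab: "\<forall>v\<in>gV (intf r1). glab (intf r2) (fV v) = glab (intf r1) v \<and>
      groot (intf r2) (fV v) = groot (intf r1) v"
    using ri1 unfolding rule_iso_def by (elim exE conjE) (rule that; assumption)
  obtain fV' fE' hV' hE' where iL': "iso (lhs r2) (lhs r3) fV' fE'" and iR': "iso (rhs r2) (rhs r3) hV' hE'"
    and fh': "\<forall>v\<in>gV (intf r2). fV' v = hV' v" and fhE': "\<forall>e\<in>gE (intf r2). fE' e = hE' e"
    and fK': "fV' ` gV (intf r2) = gV (intf r3)" and fKE': "fE' ` gE (intf r2) = gE (intf r3)"
    and lab': "\<forall>v\<in>gV (intf r2). glab (intf r3) (fV' v) = glab (intf r2) v \<and>
      groot (intf r3) (fV' v) = groot (intf r2) v"
    using ri2 unfolding rule_iso_def by (elim exE conjE) (rule that; assumption)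
  note K3 = closed_ruleD[OF r3]
  have "iso (lhs r1) (lhs r3) (fV' \<circ> fV) (fE' \<circ> fE)" by (rule iso_trans[OF K3(1) iL iL'])
  moreover have "iso (rhs r1) (rhs r3) (hV' \<circ> hV) (hE' \<circ> hE)" by (rule iso_trans[OF K3(2) iR iR'])
  moreover have "\<forall>v\<in>gV (intf r1). (fV' \<circ> fV) v = (hV' \<circ> hV) v \<and>
      glab (intf r3) ((fV' \<circ> fV) v) = glab (intf r1) v \<and> groot (intf r3) ((fV' \<circ> fV) v) = groot (intf r1) v"
  proof
    fix v assume v: "v \<in> gV (intf r1)"
    then have "fV v \<in> gV (intf r2)" using fK by blast
    then show "(fV' \<circ> fV) v = (hV' \<circ> hV) v \<and> glab (intf r3) ((fV' \<circ> fV) v) = glab (intf r1) v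
        \<and> groot (intf r3) ((fV' \<circ> fV) v) = groot (intf r1) v"
      using v fh fh' lab lab' by simp
  qed
  moreover have "\<forall>e\<in>gE (intf r1). (fE' \<circ> fE) e = (hE' \<circ> hE) e" using fKE fhE fhE' by auto
  moreover have "(fV' \<circ> fV) ` gV (intf r1) = gV (intf r3)" "(fE' \<circ> fE) ` gE (intf r1) = gE (intf r3)"
    unfolding image_comp[symmetric] fK fK' fKE fKE' by simp_all
  ultimately show ?thesis unfolding rule_iso_def by blast
qed

lemma rule_iso_imp_rule_nf_iso: "rule_iso r1 r2 \<Longrightarrow> rule_nf_iso r1 r2"
  unfolding rule_nf_iso_def rule_iso_def by auto

lemma rule_cls_image_eqD:
  assumes "rule_cls LV LE rel ` R1 = rule_cls LV LE rel ` R2"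
    and "r1 \<in> R1" "wf_rule LV LE r1" "rel r1 r1"
  obtains r2 where "r2 \<in> R2" "rel r1 r2"
proof -
  obtain r2 where "r2 \<in> R2" "rule_cls LV LE rel r1 = rule_cls LV LE rel r2"
    using assms(1,2) by (metis imageE imageI)
  moreover have "r1 \<in> rule_cls LV LE rel r1" using assms(3,4) by (simp add: rule_cls_def)
  ultimately show ?thesis using that by (auto simp: rule_cls_def)
qed

lemma rule_cls_rule_nf_iso_eq:
  assumes r1: "closed_rule r1" and r2: "closed_rule r2" and ni: "rule_nf_iso r1 r2"
  shows "rule_cls LV LE rule_nf_iso r1 = rule_cls LV LE rule_nf_iso r2"
proof -
  have "rule_nf_iso r2 r1"
    using rule_iso_sym[OF closed_rule_rule_nf[OF r1]] ni by (simp add: rule_nf_iso_def)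
  then show ?thesis
    using rule_iso_trans[OF closed_rule_rule_nf[OF r1]] rule_iso_trans[OF closed_rule_rule_nf[OF r2]] ni
    unfolding rule_cls_def rule_nf_iso_def by blast
qed

lemma gts_iso_imp_norm_equiv:
  assumes "gts LV LE R1" "gts LV LE R2" "gts_iso LV LE R1 R2"
  shows "norm_equiv LV LE R1 R2"
proof -
  have "rule_cls LV LE rule_nf_iso ` Ra \<subseteq> rule_cls LV LE rule_nf_iso ` Rb"
    if ga: "gts LV LE Ra" and gb: "gts LV LE Rb"
      and eq: "rule_cls LV LE rule_iso ` Ra = rule_cls LV LE rule_iso ` Rb" for Ra Rb
  proof
    fix C assume "C \<in> rule_cls LV LE rule_nf_iso ` Ra"
    then obtain a where a: "a \<in> Ra" "C = rule_cls LV LE rule_nf_iso a" by blast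
    have wa: "wf_rule LV LE a" using ga a by (auto simp: gts_def)
    obtain b where b: "b \<in> Rb" "rule_iso a b"
      using rule_cls_image_eqD[OF eq a(1) wa rule_iso_refl[OF wf_rule_closed_rule[OF wa]]] .
    have "wf_rule LV LE b" using gb b by (auto simp: gts_def)
    then have "C = rule_cls LV LE rule_nf_iso b"
      using a rule_cls_rule_nf_iso_eq[OF wf_rule_closed_rule[OF wa]] rule_iso_imp_rule_nf_iso[OF b(2)]
      by (simp add: wf_rule_closed_rule)
    then show "C \<in> rule_cls LV LE rule_nf_iso ` Rb" using b by blast
  qed
  then show ?thesis using assms unfolding gts_iso_def norm_equiv_def by (metis subset_antisym)
qed

lemma norm_equiv_steps_subset:
  assumes g1: "gts LV LE R1" and g2: "gts LV LE R2"
    and ne: "rule_cls LV LE rule_nf_iso ` R1 = rule_cls LV LE rule_nf_iso ` R2"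
  shows "steps LV LE R1 \<subseteq> steps LV LE R2"
proof
  fix p assume "p \<in> steps LV LE R1"
  then obtain G H where p: "p = (cls LV LE G, cls LV LE H)" and tG: "tlrg LV LE G"
    and d: "derives LV LE R1 G H" by (auto simp: steps_def)
  obtain r1 fV1 fE1 where r1: "r1 \<in> R1" and m1: "is_match r1 G fV1 fE1" and gH: "graph_over LV LE H"
    and iH: "isomorphic H (app_res G r1 fV1 fE1)" using d by (auto simp: derives_def)
  have w1: "wf_rule LV LE r1" using g1 r1 by (auto simp: gts_def)
  have c1: "closed_rule r1" using w1 by (rule wf_rule_closed_rule)
  obtain r2 where r2: "r2 \<in> R2" and ni: "rule_iso (rule_nf r1) (rule_nf r2)"
    using rule_cls_image_eqD[OF ne r1 w1] rule_iso_refl[OF closed_rule_rule_nf[OF c1]]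
    unfolding rule_nf_iso_def by blast
  have c2: "closed_rule r2" using g2 r2 by (auto simp: gts_def intro: wf_rule_closed_rule)
  have cG: "incidence_closed G" using tG by (rule tlrg_incidence_closed)
  obtain fV2 fE2 phi psi where m2: "is_match r2 G fV2 fE2"
    and i12: "iso (app_res G (rule_nf r1) fV1 fE1) (app_res G (rule_nf r2) fV2 fE2) phi psi"
    using app_res_rule_nf_transfer[OF cG c1 c2 ni m1] .
  have closed_nf: "incidence_closed (app_res G (rule_nf r) fV fE)"
    if "closed_rule r" "is_match r G fV fE" for r fV fE
    using incidence_closed_app_res[OF cG closed_rule_rule_nf[OF that(1)]] that(2)
    by (simp add: is_match_rule_nf)
  text \<open>H is isomorphic to the r1-result, hence to the nf(r1)-result, to the nf(r2)-result,
    and finally to the r2-result.\<close>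
  obtain f g where "iso H (app_res G r1 fV1 fE1) f g" using iH by (auto simp: isomorphic_def)
  note iso_trans[OF closed_nf[OF c1 m1] this iso_sym[OF closed_nf[OF c1 m1] app_res_rule_nf_iso[OF cG c1 m1]]]
  note iso_trans[OF closed_nf[OF c2 m2] this i12]
  note iso_trans[OF incidence_closed_app_res[OF cG c2 m2] this app_res_rule_nf_iso[OF cG c2 m2]]
  then have "derives LV LE R2 G H" using gH r2 m2 unfolding derives_def isomorphic_def by blast
  then show "p \<in> steps LV LE R2" using p tG by (auto simp: steps_def)
qed

lemma norm_equiv_imp_step_equiv:
  "gts LV LE R1 \<Longrightarrow> gts LV LE R2 \<Longrightarrow> norm_equiv LV LE R1 R2 \<Longrightarrow> step_equiv LV LE R1 R2"
  using norm_equiv_steps_subset[of LV LE R1 R2] norm_equiv_steps_subset[of LV LE R2 R1]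
  unfolding norm_equiv_def step_equiv_def by (metis subset_antisym)

lemma step_equiv_imp_sem_equiv: "step_equiv LV LE R1 R2 \<Longrightarrow> sem_equiv LV LE R1 R2"
  by (simp add: step_equiv_def sem_equiv_def sem_def)

section \<open>Counterexamples to the converses\<close>

definition empty_graph :: "'lv \<Rightarrow> ('lv, 'le) lgraph" where
  "empty_graph a = \<lparr>gV = {}, gE = {}, gsrc = (\<lambda>_. 0), gtgt = (\<lambda>_. 0), glab = (\<lambda>_. Some a),
     gmrk = (\<lambda>_. undefined), groot = (\<lambda>_. Some False)\<rparr>"

definition single_node :: "'lv \<Rightarrow> ('lv, 'le) lgraph" where
  "single_node a = (empty_graph a)\<lparr>gV := {0}\<rparr>"

definition rule_skip :: "'lv \<Rightarrow> ('lv, 'le) lrule" where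
  "rule_skip a = \<lparr>lhs = empty_graph a, intf = empty_graph a, rhs = empty_graph a\<rparr>"

definition rule_keep_node :: "'lv \<Rightarrow> ('lv, 'le) lrule" where
  "rule_keep_node a = \<lparr>lhs = single_node a, intf = single_node a, rhs = single_node a\<rparr>"

text \<open>Like the previous rule, but the interface node is unlabelled, so the rule formally
  relabels the node (with its old label).\<close>
definition rule_relabel_node :: "'lv \<Rightarrow> ('lv, 'le) lrule" where
  "rule_relabel_node a =
     \<lparr>lhs = single_node a, intf = (single_node a)\<lparr>glab := (\<lambda>_. None)\<rparr>, rhs = single_node a\<rparr>"

definition rule_add_node :: "'lv \<Rightarrow> ('lv, 'le) lrule" where
  "rule_add_node a = \<lparr>lhs = empty_graph a, intf = empty_graph a, rhs = single_node a\<rparr>"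

lemmas example_defs = empty_graph_def single_node_def rule_skip_def rule_keep_node_def
  rule_relabel_node_def rule_add_node_def

lemma tlrg_empty_graph: "tlrg {a} LE (empty_graph a)"
  by (simp add: example_defs tlrg_def graph_over_def)

lemma gts_examples:
  assumes "finite LE" "R \<subseteq> {rule_skip a, rule_keep_node a, rule_relabel_node a, rule_add_node a}"
  shows "gts {a} LE R"
proof -
  have "wf_rule {a} LE r" if "r \<in> {rule_skip a, rule_keep_node a, rule_relabel_node a, rule_add_node a}" for r
    using that by (auto simp: example_defs wf_rule_def tlrg_def graph_over_def subgraph_def)
  then show ?thesis
    using assms finite_subset[OF assms(2)] unfolding gts_def by blast
qed

lemma norm_equiv_not_gts_iso:
  fixes a :: 'lv and LE :: "'le set"
  shows "norm_equiv {a} LE {rule_keep_node a} {rule_relabel_node a} \<and>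
   \<not> gts_iso {a} LE {rule_keep_node a} {rule_relabel_node a}"
proof
  have "rule_nf (rule_keep_node a) = (rule_nf (rule_relabel_node a) :: ('lv, 'le) lrule)"
    by (simp add: example_defs rule_nf_def)
  then show "norm_equiv {a} LE {rule_keep_node a} {rule_relabel_node a}"
    by (simp add: norm_equiv_def rule_cls_def rule_nf_iso_def)
  have w: "wf_rule {a} LE (rule_keep_node a)"
    by (simp add: example_defs wf_rule_def tlrg_def graph_over_def subgraph_def)
  have not_iso: "\<not> rule_iso (rule_keep_node a) (rule_relabel_node a :: ('lv, 'le) lrule)"
    by (auto simp: rule_iso_def example_defs)
  show "\<not> gts_iso {a} LE {rule_keep_node a} {rule_relabel_node a}"
  proof
    assume "gts_iso {a} LE {rule_keep_node a} {rule_relabel_node a}"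
    then obtain r2 :: "('lv, 'le) lrule" where "r2 \<in> {rule_relabel_node a}" "rule_iso (rule_keep_node a) r2"
      using rule_cls_image_eqD[where rel = rule_iso, OF _ singletonI w rule_iso_refl[OF wf_rule_closed_rule[OF w]]]
      unfolding gts_iso_def by blast
    then show False using not_iso by simp
  qed
qed

lemma is_match_rule_skip: "is_match (rule_skip a) G fV fE"
  by (simp add: is_match_def morph_def example_defs)

lemma iso_app_res_rule_skip:
  "incidence_closed G \<Longrightarrow> iso G (app_res G (rule_skip a) fV fE) (\<lambda>x. 2 * x) (\<lambda>x. 2 * x)"
  by (rule isoI) (auto simp: inj_on_def app_res_nodes app_res_edges app_res_even example_defs)

lemma iso_app_res_rule_keep_node:
  "iso H (app_res G (rule_keep_node a) fV fE) f g \<Longrightarrow> iso H (app_res G (rule_skip a) fV' fE') f g"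
  by (rule iso_cong_target)
    (auto simp: app_res_nodes app_res_edges app_res_even example_defs)

lemma step_equiv_not_norm_equiv:
  fixes a :: 'lv and LE :: "'le set"
  shows "step_equiv {a} LE {rule_skip a, rule_keep_node a} {rule_skip a} \<and>
   \<not> norm_equiv {a} LE {rule_skip a, rule_keep_node a} {rule_skip a}"
proof
  have "derives {a} LE {rule_skip a} G H" if d: "derives {a} LE {rule_skip a, rule_keep_node a} G H" for G H
  proof -
    obtain r fV fE where r: "r \<in> {rule_skip a, rule_keep_node a}" and gH: "graph_over {a} LE H"
      and "isomorphic H (app_res G r fV fE)"
      using d unfolding derives_def by blast
    then obtain f g where "iso H (app_res G r fV fE) f g" unfolding isomorphic_def by blast
    then have "iso H (app_res G (rule_skip a) fV fE) f g"
      using r iso_app_res_rule_keep_node[of H G a fV fE f g fV fE] by auto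
    then show ?thesis
      using gH is_match_rule_skip[of a G fV fE] unfolding derives_def isomorphic_def by blast
  qed
  then have "steps {a} LE {rule_skip a, rule_keep_node a} \<subseteq> steps {a} LE {rule_skip a}"
    unfolding steps_def by blast
  moreover have "steps {a} LE {rule_skip a} \<subseteq> steps {a} LE {rule_skip a, rule_keep_node a}"
    unfolding steps_def derives_def by blast
  ultimately show "step_equiv {a} LE {rule_skip a, rule_keep_node a} {rule_skip a}"
    unfolding step_equiv_def by (rule subset_antisym)
  have w: "wf_rule {a} LE (rule_keep_node a)"
    by (simp add: example_defs wf_rule_def tlrg_def graph_over_def subgraph_def)
  text \<open>The left-hand sides differ in their number of nodes.\<close>
  have not_nf_iso: "\<not> rule_nf_iso (rule_keep_node a) (rule_skip a :: ('lv, 'le) lrule)"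
    by (auto simp: rule_nf_iso_def rule_iso_def iso_def bij_betw_def example_defs)
  have refl: "rule_nf_iso (rule_keep_node a) (rule_keep_node a :: ('lv, 'le) lrule)"
    unfolding rule_nf_iso_def by (rule rule_iso_refl[OF closed_rule_rule_nf[OF wf_rule_closed_rule[OF w]]])
  show "\<not> norm_equiv {a} LE {rule_skip a, rule_keep_node a} {rule_skip a}"
  proof
    assume "norm_equiv {a} LE {rule_skip a, rule_keep_node a} {rule_skip a}"
    moreover have "rule_keep_node a \<in> {rule_skip a, rule_keep_node a :: ('lv, 'le) lrule}" by simp
    ultimately obtain r2 :: "('lv, 'le) lrule" where "r2 \<in> {rule_skip a}" "rule_nf_iso (rule_keep_node a) r2"
      unfolding norm_equiv_def using w refl by (rule rule_cls_image_eqD)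
    then show False using not_nf_iso by simp
  qed
qed

lemma steps_rule_skip_loop:
  assumes "rule_skip a \<in> R" and G: "tlrg {a} LE G"
  shows "(cls {a} LE G, cls {a} LE G) \<in> steps {a} LE R"
proof -
  have "derives {a} LE R G G"
    using assms iso_app_res_rule_skip[OF tlrg_incidence_closed[OF G], of a id id] is_match_rule_skip[of a G id id]
    unfolding derives_def isomorphic_def tlrg_def by blast
  then show ?thesis using G by (auto simp: steps_def)
qed

lemma tlrg_if_derives_skip_add:
  assumes R: "R \<subseteq> {rule_skip a, rule_add_node a}" and G: "tlrg {a} LE G" and d: "derives {a} LE R G H"
  shows "tlrg {a} LE H"
proof -
  obtain r fV fE f g where "r \<in> R" and H: "graph_over {a} LE H"
    and i: "iso H (app_res G r fV fE) f g"
    using d unfolding derives_def isomorphic_def by blast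
  then have r: "r = rule_skip a \<or> r = rule_add_node a" using R by blast
  have "glab (app_res G r fV fE) y \<noteq> None \<and> groot (app_res G r fV fE) y \<noteq> None"
    if y: "y \<in> gV (app_res G r fV fE)" for y
  proof (cases "even y")
    case True
    then obtain x where "y = 2 * x" "x \<in> gV G" using y r by (auto simp: app_res_nodes example_defs)
    then show ?thesis using r G by (auto simp: app_res_even example_defs tlrg_def)
  next
    case False
    then obtain x where "y = Suc (2 * x)" by (metis oddE Suc_eq_plus1)
    then show ?thesis using r by (auto simp: app_res_odd example_defs)
  qed
  moreover have "f v \<in> gV (app_res G r fV fE)" if "v \<in> gV H" for v
    using i that by (auto simp: iso_def bij_betw_def)
  ultimately have "glab H v \<noteq> None \<and> groot H v \<noteq> None" if "v \<in> gV H" for v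
    using iso_node_attrs[OF i] that by metis
  then show ?thesis using H by (simp add: tlrg_def)
qed

lemma sem_eq_divergence_if_rule_skip:
  assumes skip: "rule_skip a \<in> R" and R: "R \<subseteq> {rule_skip a, rule_add_node a}"
    and X: "X \<in> classes {a} LE"
  shows "sem {a} LE R X = {None}"
proof -
  obtain G where X_def: "X = cls {a} LE G" and G: "tlrg {a} LE G" using X by (auto simp: classes_def)
  text \<open>Every class reachable from X is again the class of a TLRG, and the skip rule loops on it.\<close>
  have "\<exists>H. tlrg {a} LE H \<and> Y = cls {a} LE H" if "(X, Y) \<in> (steps {a} LE R)\<^sup>*" for Y
    using that
  proof (induction rule: rtrancl_induct)
    case (step Y Z)
    then show ?case using tlrg_if_derives_skip_add[OF R] by (auto simp: steps_def)
  qed (use X_def G in blast)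
  then have no_nf: "\<exists>Z. (Y, Z) \<in> steps {a} LE R" if "(X, Y) \<in> (steps {a} LE R)\<^sup>*" for Y
    using that steps_rule_skip_loop[OF skip] by blast
  have "(X, X) \<in> steps {a} LE R" using steps_rule_skip_loop[OF skip G] X_def by simp
  then have "\<exists>s. s 0 = X \<and> (\<forall>i. (s i, s (Suc i)) \<in> steps {a} LE R)" by (intro exI[of _ "\<lambda>_. X"]) simp
  then show ?thesis using no_nf unfolding sem_def by auto
qed

lemma sem_equiv_not_step_equiv:
  fixes a :: 'lv and LE :: "'le set"
  shows "sem_equiv {a} LE {rule_skip a, rule_add_node a} {rule_skip a} \<and>
   \<not> step_equiv {a} LE {rule_skip a, rule_add_node a} {rule_skip a}"
proof
  show "sem_equiv {a} LE {rule_skip a, rule_add_node a} {rule_skip a}"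
    unfolding sem_equiv_def by (simp add: sem_eq_divergence_if_rule_skip)
  let ?A = "app_res (empty_graph a) (rule_add_node a) id id :: ('lv, 'le) lgraph"
  have E: "tlrg {a} LE (empty_graph a :: ('lv, 'le) lgraph)" by (rule tlrg_empty_graph)
  have A: "tlrg {a} LE ?A" by (simp add: app_res_def Let_def example_defs tlrg_def graph_over_def)
  have "is_match (rule_add_node a) (empty_graph a :: ('lv, 'le) lgraph) id id"
    by (simp add: is_match_def morph_def example_defs)
  then have "derives {a} LE {rule_skip a, rule_add_node a} (empty_graph a) ?A"
    using A iso_refl[OF tlrg_incidence_closed[OF A]] unfolding derives_def isomorphic_def tlrg_def by blast
  then have add_step: "(cls {a} LE (empty_graph a), cls {a} LE ?A) \<in> steps {a} LE {rule_skip a, rule_add_node a}"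
    using E unfolding steps_def by blast
  text \<open>Derivations by the skip rule preserve emptiness of the node set.\<close>
  have "(cls {a} LE (empty_graph a), cls {a} LE ?A) \<notin> steps {a} LE {rule_skip a}"
  proof
    assume "(cls {a} LE (empty_graph a), cls {a} LE ?A) \<in> steps {a} LE {rule_skip a}"
    then obtain G H where cG: "cls {a} LE (empty_graph a) = cls {a} LE G" and cH: "cls {a} LE ?A = cls {a} LE H"
      and G: "tlrg {a} LE G" and d: "derives {a} LE {rule_skip a} G H" by (auto simp: steps_def)
    have "G \<in> cls {a} LE (empty_graph a)" using tlrg_mem_cls[OF G] cG by simp
    then obtain f g where "iso (empty_graph a) G f g" by (auto simp: cls_def isomorphic_def)
    then have G_empty: "gV G = {}" using iso_nodes_empty_iff by (fastforce simp: example_defs)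
    obtain fV fE f' g' where "iso H (app_res G (rule_skip a) fV fE) f' g'"
      using d unfolding derives_def isomorphic_def by blast
    then have H_empty: "gV H = {}" using G_empty iso_nodes_empty_iff by (fastforce simp: app_res_nodes example_defs)
    have "?A \<in> cls {a} LE H" using tlrg_mem_cls[OF A] cH by simp
    then obtain f2 g2 where "iso H ?A f2 g2" by (auto simp: cls_def isomorphic_def)
    then show False using H_empty iso_nodes_empty_iff by (fastforce simp: app_res_nodes example_defs)
  qed
  then show "\<not> step_equiv {a} LE {rule_skip a, rule_add_node a} {rule_skip a}"
    using add_step unfolding step_equiv_def by blast
qed

theorem theorem3p4:
  fixes LV :: "'lv set" and LE :: "'le set"
  shows "(\<forall>R1 R2. gts LV LE R1 \<and> gts LV LE R2 \<longrightarrow>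
            (gts_iso LV LE R1 R2 \<longrightarrow> norm_equiv LV LE R1 R2) \<and>
            (norm_equiv LV LE R1 R2 \<longrightarrow> step_equiv LV LE R1 R2) \<and>
            (step_equiv LV LE R1 R2 \<longrightarrow> sem_equiv LV LE R1 R2)) \<and>
         (\<exists>(LV' :: 'lv set) (LE' :: 'le set) R1 R2. gts LV' LE' R1 \<and> gts LV' LE' R2 \<and>
            norm_equiv LV' LE' R1 R2 \<and> \<not> gts_iso LV' LE' R1 R2) \<and>
         (\<exists>(LV' :: 'lv set) (LE' :: 'le set) R1 R2. gts LV' LE' R1 \<and> gts LV' LE' R2 \<and>
            step_equiv LV' LE' R1 R2 \<and> \<not> norm_equiv LV' LE' R1 R2) \<and>
         (\<exists>(LV' :: 'lv set) (LE' :: 'le set) R1 R2. gts LV' LE' R1 \<and> gts LV' LE' R2 \<and>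
            sem_equiv LV' LE' R1 R2 \<and> \<not> step_equiv LV' LE' R1 R2)"
proof (intro conjI allI impI)
  fix R1 R2 assume "gts LV LE R1 \<and> gts LV LE R2"
  then show "gts_iso LV LE R1 R2 \<Longrightarrow> norm_equiv LV LE R1 R2"
    and "norm_equiv LV LE R1 R2 \<Longrightarrow> step_equiv LV LE R1 R2"
    and "step_equiv LV LE R1 R2 \<Longrightarrow> sem_equiv LV LE R1 R2"
    by (simp_all add: gts_iso_imp_norm_equiv norm_equiv_imp_step_equiv step_equiv_imp_sem_equiv)
next
  let ?a = "undefined :: 'lv" and ?E = "{} :: 'le set"
  have gts: "gts {?a} ?E R" if "R \<subseteq> {rule_skip ?a, rule_keep_node ?a, rule_relabel_node ?a, rule_add_node ?a}" for R
    using gts_examples[OF _ that] by simp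
  show "\<exists>(LV' :: 'lv set) (LE' :: 'le set) R1 R2. gts LV' LE' R1 \<and> gts LV' LE' R2 \<and>
      norm_equiv LV' LE' R1 R2 \<and> \<not> gts_iso LV' LE' R1 R2"
    using norm_equiv_not_gts_iso[of ?a ?E] gts[of "{rule_keep_node ?a}"] gts[of "{rule_relabel_node ?a}"]
    by (intro exI[of _ "{?a}"] exI[of _ ?E] exI[of _ "{rule_keep_node ?a}"] exI[of _ "{rule_relabel_node ?a}"]) auto
  show "\<exists>(LV' :: 'lv set) (LE' :: 'le set) R1 R2. gts LV' LE' R1 \<and> gts LV' LE' R2 \<and>
      step_equiv LV' LE' R1 R2 \<and> \<not> norm_equiv LV' LE' R1 R2"
    using step_equiv_not_norm_equiv[of ?a ?E] gts[of "{rule_skip ?a, rule_keep_node ?a}"] gts[of "{rule_skip ?a}"]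
    by (intro exI[of _ "{?a}"] exI[of _ ?E] exI[of _ "{rule_skip ?a, rule_keep_node ?a}"] exI[of _ "{rule_skip ?a}"]) auto
  show "\<exists>(LV' :: 'lv set) (LE' :: 'le set) R1 R2. gts LV' LE' R1 \<and> gts LV' LE' R2 \<and>
      sem_equiv LV' LE' R1 R2 \<and> \<not> step_equiv LV' LE' R1 R2"
    using sem_equiv_not_step_equiv[of ?a ?E] gts[of "{rule_skip ?a, rule_add_node ?a}"] gts[of "{rule_skip ?a}"]
    by (intro exI[of _ "{?a}"] exI[of _ ?E] exI[of _ "{rule_skip ?a, rule_add_node ?a}"] exI[of _ "{rule_skip ?a}"]) auto
qed

end
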